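(* Let $G$ and $H$ be finite connected graphs such that $H$ fractionally tiles $G$. Then for all $t>0$, $$\frac{1}{|G|}\sum_{x\in V(G)}p_t(x;G)\le \frac{1}{|H|}\sum_{x\in V(H)}p_t(x;H),$$ with equality if and only if $G=H$.
   Context: For a graph $K$, its Laplacian $\Delta_K$ is the matrix indexed by $V(K)$ whose off-diagonal entry $\Delta_K(x,y)$ is minus the number of edges joining $x$ and $y$ and whose row sums vanish. For continuous-time simple random walk on $K$, $p_t(x;K)$ is the probability that the walk started at $x$ is at $x$ at time $t$, i.e., the $(x,x)$-entry of $e^{-t\Delta_K}$. $|K|$ is the number of vertices. A copy of $H$ in $G$ is a subgraph isomorphic to $H$; $H$ fractionally tiles $G$ means there is a finite list of copies of $H$ in $G$ such that every vertex of $G$ is covered the same number of times. *)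

theory Defs
  imports Complex_Main
begin

text \<open>A finite loopless multigraph: vertex set V and a symmetric edge-multiplicity
  function m (m x y = number of edges joining x and y), supported on V.\<close>
definition mgraph :: "'a set \<Rightarrow> ('a \<Rightarrow> 'a \<Rightarrow> nat) \<Rightarrow> bool" where
  "mgraph V m \<longleftrightarrow> finite V \<and> V \<noteq> {} \<and> (\<forall>x y. m x y = m y x) \<and> (\<forall>x. m x x = 0)
     \<and> (\<forall>x y. 0 < m x y \<longrightarrow> x \<in> V \<and> y \<in> V)"

definition connected_mg :: "'a set \<Rightarrow> ('a \<Rightarrow> 'a \<Rightarrow> nat) \<Rightarrow> bool" where
  "connected_mg V m \<longleftrightarrow> (\<forall>x\<in>V. \<forall>y\<in>V. (\<lambda>u v. 0 < m u v)\<^sup>*\<^sup>* x y)"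

definition laplacian :: "'a set \<Rightarrow> ('a \<Rightarrow> 'a \<Rightarrow> nat) \<Rightarrow> 'a \<Rightarrow> 'a \<Rightarrow> real" where
  "laplacian V m x y = (if x = y then (\<Sum>z\<in>V. real (m x z)) else - real (m x y))"

fun matpow :: "'a set \<Rightarrow> ('a \<Rightarrow> 'a \<Rightarrow> real) \<Rightarrow> nat \<Rightarrow> 'a \<Rightarrow> 'a \<Rightarrow> real" where
  "matpow V A 0 = (\<lambda>x y. if x = y then 1 else 0)"
| "matpow V A (Suc k) = (\<lambda>x y. \<Sum>z\<in>V. matpow V A k x z * A z y)"

text \<open>Return probability p_t(x;K) = (x,x)-entry of exp(-t Laplacian), via the exponential series.\<close>
definition heat_kernel :: "'a set \<Rightarrow> ('a \<Rightarrow> 'a \<Rightarrow> nat) \<Rightarrow> real \<Rightarrow> 'a \<Rightarrow> real" where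
  "heat_kernel V m t x = (\<Sum>k. (- t) ^ k / fact k * matpow V (laplacian V m) k x x)"

definition mg_iso :: "'b set \<Rightarrow> ('b \<Rightarrow> 'b \<Rightarrow> nat) \<Rightarrow> 'a set \<Rightarrow> ('a \<Rightarrow> 'a \<Rightarrow> nat) \<Rightarrow> bool" where
  "mg_iso VH mH VG mG \<longleftrightarrow> (\<exists>\<phi>. bij_betw \<phi> VH VG \<and>
       (\<forall>x\<in>VH. \<forall>y\<in>VH. mG (\<phi> x) (\<phi> y) = mH x y))"

definition is_copy :: "'b set \<Rightarrow> ('b \<Rightarrow> 'b \<Rightarrow> nat) \<Rightarrow> 'a set \<Rightarrow> ('a \<Rightarrow> 'a \<Rightarrow> nat)
    \<Rightarrow> 'a set \<times> ('a \<Rightarrow> 'a \<Rightarrow> nat) \<Rightarrow> bool" where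
  "is_copy VH mH VG mG C \<longleftrightarrow> (case C of (W, e) \<Rightarrow>
      W \<subseteq> VG \<and> (\<forall>x y. e x y \<le> mG x y) \<and> (\<forall>x y. 0 < e x y \<longrightarrow> x \<in> W \<and> y \<in> W)
      \<and> mg_iso VH mH W e)"

definition frac_tiles :: "'b set \<Rightarrow> ('b \<Rightarrow> 'b \<Rightarrow> nat) \<Rightarrow> 'a set \<Rightarrow> ('a \<Rightarrow> 'a \<Rightarrow> nat) \<Rightarrow> bool" where
  "frac_tiles VH mH VG mG \<longleftrightarrow> (\<exists>cs c. (\<forall>C\<in>set cs. is_copy VH mH VG mG C) \<and> 0 < c \<and>
      (\<forall>v\<in>VG. length (filter (\<lambda>C. v \<in> fst C) cs) = c))"

end

theory Submission
  imports Defs "HOL-Analysis.Analysis"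
begin

text \<open>Expand each unit eigenvector \<open>u j\<close> of the Laplacian of G, pulled back along the
  copies of H, in an orthonormal eigenbasis \<open>v k\<close> of the Laplacian of H. Since every vertex
  of G is covered \<open>c\<close> times, the squared coefficients divided by \<open>c\<close> form a probability
  distribution on pairs (copy, \<open>k\<close>); since every edge of G is covered at most \<open>c\<close> times,
  the mean of \<open>nu k\<close> under it is at most \<open>lam j\<close>. Jensen's inequality for \<open>exp (- t * _)\<close>
  bounds \<open>exp (- t * lam j)\<close> by the corresponding average of \<open>exp (- t * nu k)\<close>, and summing
  over \<open>j\<close> (Parseval in G) gives \<open>tr exp (- t L_G) \<le> N / c * tr exp (- t L_H)\<close> for a tiling
  by \<open>N\<close> copies, where \<open>N |H| = c |G|\<close>.

  In the case of equality every pulled-back eigenvector is an eigenvector on each copy with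
  the same eigenvalue. Expanding in the eigenbasis of G, the Laplacians of G and of a copy
  then agree on the rows indexed by the copy, so no edge of G leaves the copy and, G being
  connected, the copy is all of G.\<close>

section \<open>Linear algebra of real functions on a finite set\<close>

definition dot :: "'a set \<Rightarrow> ('a \<Rightarrow> real) \<Rightarrow> ('a \<Rightarrow> real) \<Rightarrow> real" where
  "dot V f g = (\<Sum>x\<in>V. f x * g x)"

definition matvec :: "'a set \<Rightarrow> ('a \<Rightarrow> 'a \<Rightarrow> real) \<Rightarrow> ('a \<Rightarrow> real) \<Rightarrow> 'a \<Rightarrow> real" where
  "matvec V A f = (\<lambda>x. \<Sum>y\<in>V. A x y * f y)"

definition bilin :: "'a set \<Rightarrow> ('a \<Rightarrow> 'a \<Rightarrow> real) \<Rightarrow> ('a \<Rightarrow> real) \<Rightarrow> ('a \<Rightarrow> real) \<Rightarrow> real" where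
  "bilin V A f g = (\<Sum>x\<in>V. \<Sum>y\<in>V. f x * A x y * g y)"

definition orthonormal_on :: "'a set \<Rightarrow> (nat \<Rightarrow> 'a \<Rightarrow> real) \<Rightarrow> nat \<Rightarrow> bool" where
  "orthonormal_on V u k \<longleftrightarrow> (\<forall>i<k. \<forall>j<k. dot V (u i) (u j) = (if i = j then 1 else 0))"

definition eigenvectors_on ::
    "'a set \<Rightarrow> ('a \<Rightarrow> 'a \<Rightarrow> real) \<Rightarrow> (nat \<Rightarrow> 'a \<Rightarrow> real) \<Rightarrow> (nat \<Rightarrow> real) \<Rightarrow> nat \<Rightarrow> bool" where
  "eigenvectors_on V A u lam k \<longleftrightarrow> (\<forall>i<k. \<forall>x\<in>V. matvec V A (u i) x = lam i * u i x)"

definition spectral_basis ::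
    "'a set \<Rightarrow> ('a \<Rightarrow> 'a \<Rightarrow> real) \<Rightarrow> (nat \<Rightarrow> 'a \<Rightarrow> real) \<Rightarrow> (nat \<Rightarrow> real) \<Rightarrow> bool" where
  "spectral_basis V A u lam \<longleftrightarrow> orthonormal_on V u (card V) \<and> eigenvectors_on V A u lam (card V)
     \<and> (\<forall>x\<in>V. \<forall>y\<in>V. (\<Sum>i<card V. u i x * u i y) = (if x = y then 1 else 0))"

lemma dot_commute: "dot V f g = dot V g f"
  unfolding dot_def by (simp add: mult.commute)

lemma dot_add_left: "dot V (\<lambda>x. f x + g x) h = dot V f h + dot V g h"
  unfolding dot_def by (simp add: distrib_right sum.distrib)

lemma dot_add_right: "dot V h (\<lambda>x. f x + g x) = dot V h f + dot V h g"
  unfolding dot_def by (simp add: distrib_left sum.distrib)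

lemma dot_diff_left: "dot V (\<lambda>x. f x - g x) h = dot V f h - dot V g h"
  unfolding dot_def by (simp add: left_diff_distrib sum_subtractf)

lemma dot_diff_right: "dot V h (\<lambda>x. f x - g x) = dot V h f - dot V h g"
  unfolding dot_def by (simp add: right_diff_distrib sum_subtractf)

lemma dot_scale_left: "dot V (\<lambda>x. c * f x) h = c * dot V f h"
  unfolding dot_def by (simp add: sum_distrib_left mult.assoc)

lemma dot_scale_right: "dot V h (\<lambda>x. c * f x) = c * dot V h f"
  unfolding dot_def by (simp add: sum_distrib_left mult.left_commute)

lemma dot_sum_left: "dot V (\<lambda>x. \<Sum>i\<in>I. c i * g i x) h = (\<Sum>i\<in>I. c i * dot V (g i) h)"
  unfolding dot_def by (simp add: sum_distrib_right sum_distrib_left mult.assoc sum.swap[of _ V])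

lemma dot_sum_right: "dot V h (\<lambda>x. \<Sum>i\<in>I. c i * g i x) = (\<Sum>i\<in>I. c i * dot V h (g i))"
  unfolding dot_def by (simp add: sum_distrib_right sum_distrib_left mult.left_commute sum.swap[of _ V])

lemma dot_cong:
  "(\<And>x. x \<in> V \<Longrightarrow> f x = f' x) \<Longrightarrow> (\<And>x. x \<in> V \<Longrightarrow> g x = g' x) \<Longrightarrow> dot V f g = dot V f' g'"
  unfolding dot_def by (rule sum.cong) auto

lemma dot_self_nonneg: "0 \<le> dot V f f"
  unfolding dot_def by (intro sum_nonneg) auto

lemma dot_self_eq_0D: "finite V \<Longrightarrow> dot V f f = 0 \<Longrightarrow> x \<in> V \<Longrightarrow> f x = 0"
  unfolding dot_def using sum_nonneg_eq_0_iff[of V "\<lambda>x. f x * f x"] by auto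

lemma square_le_dot_self: "finite V \<Longrightarrow> x \<in> V \<Longrightarrow> (f x)\<^sup>2 \<le> dot V f f"
  unfolding dot_def power2_eq_square by (rule member_le_sum[where f="\<lambda>x. f x * f x"]) auto

lemma dot_indicator_left: "finite V \<Longrightarrow> x0 \<in> V \<Longrightarrow> dot V (\<lambda>x. if x = x0 then 1 else 0) g = g x0"
  unfolding dot_def by (simp add: if_distrib[of "\<lambda>a. a * _"] sum.delta cong: if_cong)

lemma dot_matvec: "dot V f (matvec V A g) = bilin V A f g"
  unfolding dot_def matvec_def bilin_def by (simp add: sum_distrib_left mult.assoc)

lemma bilin_commute: "(\<And>x y. A x y = A y x) \<Longrightarrow> bilin V A f g = bilin V A g f"
  unfolding bilin_def by (subst sum.swap) (simp add: mult.commute mult.left_commute)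

lemma bilin_cong:
  "(\<And>x. x \<in> V \<Longrightarrow> f x = f' x) \<Longrightarrow> (\<And>x. x \<in> V \<Longrightarrow> g x = g' x) \<Longrightarrow> bilin V A f g = bilin V A f' g'"
  unfolding bilin_def by (intro sum.cong refl) auto

lemma bilin_add_left: "bilin V A (\<lambda>x. f x + g x) h = bilin V A f h + bilin V A g h"
  unfolding bilin_def by (simp add: distrib_right sum.distrib)

lemma bilin_add_right: "bilin V A h (\<lambda>x. f x + g x) = bilin V A h f + bilin V A h g"
  unfolding bilin_def by (simp add: distrib_left sum.distrib)

lemma bilin_scale_left: "bilin V A (\<lambda>x. c * f x) h = c * bilin V A f h"
  unfolding bilin_def by (simp add: sum_distrib_left mult.assoc)

lemma bilin_scale_right: "bilin V A h (\<lambda>x. c * f x) = c * bilin V A h f"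
  unfolding bilin_def by (simp add: sum_distrib_left mult.assoc mult.left_commute)

lemma bilin_identity: "finite V \<Longrightarrow> bilin V (\<lambda>x y. if x = y then 1 else 0) f f = dot V f f"
  unfolding bilin_def dot_def by (simp add: if_distrib[of "\<lambda>a. _ * a * _"] sum.delta cong: if_cong)

lemma bilin_expansion:
  assumes "finite V" and "\<forall>x\<in>V. \<forall>y\<in>V. B x y = (\<Sum>k<n. c k * v k x * v k y)"
  shows "(\<Sum>k<n. c k * (dot V w (v k))\<^sup>2) = bilin V B w w"
proof -
  have "(\<Sum>k<n. c k * (dot V w (v k))\<^sup>2) = (\<Sum>k<n. \<Sum>x\<in>V. \<Sum>y\<in>V. w x * (c k * v k x * v k y) * w y)"
    unfolding dot_def power2_eq_square by (simp add: sum_distrib_left sum_distrib_right mult_ac)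
  also have "\<dots> = (\<Sum>x\<in>V. \<Sum>y\<in>V. w x * (\<Sum>k<n. c k * v k x * v k y) * w y)"
    by (simp add: sum_distrib_left sum_distrib_right sum.swap[of _ "{..<n}"])
  also have "\<dots> = bilin V B w w" unfolding bilin_def using assms(2) by (intro sum.cong refl) simp
  finally show ?thesis .
qed

lemma parseval:
  assumes "finite V" and "\<forall>x\<in>V. \<forall>y\<in>V. (\<Sum>k<n. v k x * v k y) = (if x = y then 1 else 0)"
  shows "(\<Sum>k<n. (dot V w (v k))\<^sup>2) = dot V w w"
proof -
  have "(\<Sum>k<n. 1 * (dot V w (v k))\<^sup>2) = bilin V (\<lambda>x y. if x = y then 1 else 0) w w"
    using assms by (intro bilin_expansion) auto
  then show ?thesis using bilin_identity[OF assms(1)] by simp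
qed

lemma continuous_on_dot:
  assumes "continuous_on UNIV g"
  shows "continuous_on UNIV (\<lambda>f::'a \<Rightarrow> real. dot V f (g f))"
proof -
  have "continuous_on UNIV (\<lambda>f::'a \<Rightarrow> real. f x * g f x)" for x
    by (rule continuous_on_mult[OF continuous_on_product_coordinates
          continuous_on_product_then_coordinatewise[OF assms]])
  then show ?thesis unfolding dot_def by (rule continuous_on_sum)
qed

lemma continuous_on_matvec: "continuous_on UNIV (\<lambda>f::'a \<Rightarrow> real. matvec V A f)"
proof -
  have "continuous_on UNIV (\<lambda>f::'a \<Rightarrow> real. A x y * f y)" for x y
    by (rule continuous_on_mult[OF continuous_on_const continuous_on_product_coordinates])
  then have "continuous_on UNIV (\<lambda>f::'a \<Rightarrow> real. matvec V A f x)" for x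
    unfolding matvec_def by (intro continuous_on_sum)
  then show ?thesis by (rule continuous_on_coordinatewise_then_product)
qed

lemma compact_PiE_cube: "compact (PiE UNIV (\<lambda>x. if x \<in> V then {-1..1::real} else {0}))"
proof -
  have "compactin (product_topology (\<lambda>_. euclidean) UNIV)
      (PiE UNIV (\<lambda>x. if x \<in> V then {-1..1::real} else {0}))"
    by (subst compactin_PiE) auto
  then show ?thesis by (simp add: euclidean_product_topology)
qed

section \<open>The spectral theorem for symmetric matrices\<close>

lemma sum_squares_orthonormal:
  assumes "orthonormal_on V u k"
  shows "(\<Sum>x\<in>V. \<Sum>i<k. (u i x)\<^sup>2) = real k"
proof -
  have "(\<Sum>x\<in>V. \<Sum>i<k. (u i x)\<^sup>2) = (\<Sum>i<k. dot V (u i) (u i))"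
    unfolding dot_def by (subst sum.swap) (simp add: power2_eq_square)
  also have "\<dots> = (\<Sum>i<k. 1)" using assms unfolding orthonormal_on_def by simp
  finally show ?thesis by simp
qed

lemma bessel_residual:
  fixes f :: "'a \<Rightarrow> real"
  assumes "orthonormal_on V u k"
  defines "r \<equiv> (\<lambda>x. f x - (\<Sum>i<k. dot V f (u i) * u i x))"
  shows "\<And>j. j < k \<Longrightarrow> dot V r (u j) = 0"
    and "dot V r r = dot V f f - (\<Sum>i<k. (dot V f (u i))\<^sup>2)"
proof -
  have perp: "dot V r (u j) = 0" if "j < k" for j
  proof -
    have "dot V r (u j) = dot V f (u j) - (\<Sum>i<k. dot V f (u i) * dot V (u i) (u j))"
      unfolding r_def by (simp only: dot_diff_left dot_sum_left)
    also have "(\<Sum>i<k. dot V f (u i) * dot V (u i) (u j)) = (\<Sum>i<k. if i = j then dot V f (u j) else 0)"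
      using assms(1) that by (intro sum.cong refl) (simp add: orthonormal_on_def)
    also have "\<dots> = dot V f (u j)" using that by (simp add: sum.delta)
    finally show ?thesis by linarith
  qed
  then show "\<And>j. j < k \<Longrightarrow> dot V r (u j) = 0" .
  have "dot V r r = dot V r f - (\<Sum>i<k. dot V f (u i) * dot V r (u i))"
    by (subst (2) r_def, simp only: dot_diff_right dot_sum_right)
  also have "(\<Sum>i<k. dot V f (u i) * dot V r (u i)) = 0"
    by (rule sum.neutral) (simp add: perp)
  also have "dot V r f = dot V f f - (\<Sum>i<k. dot V f (u i) * dot V (u i) f)"
    unfolding r_def by (simp only: dot_diff_left dot_sum_left)
  finally show "dot V r r = dot V f f - (\<Sum>i<k. (dot V f (u i))\<^sup>2)"
    by (simp add: dot_commute[of V "u _" f] power2_eq_square)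
qed

lemma dot_normalize:
  assumes "0 < dot V f f"
  defines "g \<equiv> (\<lambda>x. (1 / sqrt (dot V f f)) * f x)"
  shows "dot V g g = 1" and "dot V g h = 0 \<longleftrightarrow> dot V f h = 0"
    and "bilin V A g g = bilin V A f f / dot V f f"
proof -
  have s: "(1 / sqrt (dot V f f)) * (1 / sqrt (dot V f f)) = 1 / dot V f f"
    using assms(1) by (simp add: field_simps)
  show "dot V g g = 1" "bilin V A g g = bilin V A f f / dot V f f"
    unfolding g_def dot_scale_left dot_scale_right bilin_scale_left bilin_scale_right mult.assoc[symmetric] s
    using assms(1) by simp_all
  show "dot V g h = 0 \<longleftrightarrow> dot V f h = 0"
    unfolding g_def dot_scale_left using assms(1) by simp
qed

lemma exists_unit_orthogonal:
  assumes fin: "finite V" and on: "orthonormal_on V u k" and k: "k < card V"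
  shows "\<exists>r. dot V r r = 1 \<and> (\<forall>i<k. dot V r (u i) = 0)"
proof -
  have "(\<Sum>x\<in>V. 1 - (\<Sum>i<k. (u i x)\<^sup>2)) = real (card V) - real k"
    using sum_squares_orthonormal[OF on] by (simp add: sum_subtractf)
  then have "0 < (\<Sum>x\<in>V. 1 - (\<Sum>i<k. (u i x)\<^sup>2))" using k by simp
  then obtain x0 where x0: "x0 \<in> V" "0 < 1 - (\<Sum>i<k. (u i x0)\<^sup>2)"
    by (metis (no_types, lifting) not_less sum_nonpos)
  define d where "d = (\<lambda>x. if x = x0 then 1 else 0::real)"
  define r where "r = (\<lambda>x. d x - (\<Sum>i<k. dot V d (u i) * u i x))"
  have dot_d: "dot V d g = g x0" for g unfolding d_def by (rule dot_indicator_left[OF fin x0(1)])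
  have "dot V r r = 1 - (\<Sum>i<k. (u i x0)\<^sup>2)"
    using bessel_residual(2)[OF on, of d] unfolding r_def dot_d by (simp add: d_def)
  with x0(2) have pos: "0 < dot V r r" by simp
  have "\<forall>i<k. dot V r (u i) = 0" using bessel_residual(1)[OF on, of _ d] unfolding r_def by blast
  then show ?thesis using dot_normalize(1,2)[OF pos] by blast
qed

text \<open>Compactness comes from restricting to functions that vanish outside \<open>V\<close>.\<close>
lemma rayleigh_minimizer_exists:
  fixes A :: "'a \<Rightarrow> 'a \<Rightarrow> real"
  assumes fin: "finite V" and unit: "\<exists>r. dot V r r = 1 \<and> (\<forall>i<k. dot V r (u i) = 0)"
  obtains f where "dot V f f = 1" "\<forall>i<k. dot V f (u i) = 0"
    "\<And>g. dot V g g = 1 \<Longrightarrow> \<forall>i<k. dot V g (u i) = 0 \<Longrightarrow> bilin V A f f \<le> bilin V A g g"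
proof -
  define restr where "restr g = (\<lambda>x. if x \<in> V then g x else 0)" for g :: "'a \<Rightarrow> real"
  have dot_restr: "dot V (restr g) h = dot V g h" "dot V h (restr g) = dot V h g" for g h
    unfolding restr_def by (auto intro: dot_cong)
  have bilin_restr: "bilin V A (restr g) (restr g) = bilin V A g g" for g
    unfolding restr_def by (auto intro: bilin_cong)
  define K where "K = PiE UNIV (\<lambda>x. if x \<in> V then {-1..1::real} else {0})
      \<inter> {f. dot V f f = 1} \<inter> (\<Inter>i\<in>{..<k}. {f. dot V f (u i) = 0})"
  have "compact K" unfolding K_def
    by (intro compact_Int_closed closed_Int closed_INT ballI compact_PiE_cube
        closed_Collect_eq[OF continuous_on_dot[OF continuous_on_id] continuous_on_const]
        closed_Collect_eq[OF continuous_on_dot[OF continuous_on_const] continuous_on_const])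
  have restr_in_K: "restr g \<in> K" if g: "dot V g g = 1" "\<forall>i<k. dot V g (u i) = 0" for g
  proof -
    have "(g x)\<^sup>2 \<le> 1" if "x \<in> V" for x using square_le_dot_self[OF fin that, of g] g(1) by simp
    then have "\<bar>g x\<bar> \<le> 1" if "x \<in> V" for x using that abs_square_le_1 by blast
    then have "restr g \<in> PiE UNIV (\<lambda>x. if x \<in> V then {-1..1} else {0})"
      by (auto simp: restr_def PiE_iff abs_le_iff)
    then show ?thesis using g unfolding K_def by (simp add: dot_restr)
  qed
  then have "K \<noteq> {}" using unit by blast
  moreover have "continuous_on K (\<lambda>f. bilin V A f f)"
    using continuous_on_dot[OF continuous_on_matvec, of V V A] unfolding dot_matvec
    by (rule continuous_on_subset) simp
  ultimately obtain f where f: "f \<in> K" "\<And>g. g \<in> K \<Longrightarrow> bilin V A f f \<le> bilin V A g g"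
    using continuous_attains_inf[OF \<open>compact K\<close>] by blast
  show ?thesis
  proof (rule that)
    show "dot V f f = 1" "\<forall>i<k. dot V f (u i) = 0" using f(1) unfolding K_def by auto
    show "bilin V A f f \<le> bilin V A g g" if "dot V g g = 1" "\<forall>i<k. dot V g (u i) = 0" for g
      using f(2)[OF restr_in_K[OF that]] unfolding bilin_restr .
  qed
qed

lemma rayleigh_bound_homogeneous:
  assumes fin: "finite V"
    and min: "\<And>g. dot V g g = 1 \<Longrightarrow> \<forall>i<k. dot V g (u i) = 0 \<Longrightarrow> \<mu> \<le> bilin V A g g"
    and perp: "\<forall>i<k. dot V g (u i) = 0"
  shows "\<mu> * dot V g g \<le> bilin V A g g"
proof (cases "dot V g g = 0")
  case True
  then have "bilin V A g g = bilin V A (\<lambda>_. 0) (\<lambda>_. 0)"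
    using dot_self_eq_0D[OF fin] by (intro bilin_cong) auto
  then show ?thesis using True by (simp add: bilin_def)
next
  case False
  then have pos: "0 < dot V g g" using dot_self_nonneg[of V g] by linarith
  have "\<mu> \<le> bilin V A g g / dot V g g"
    using min[OF dot_normalize(1)[OF pos]] dot_normalize(2,3)[OF pos] perp by simp
  then show ?thesis using pos by (simp add: field_simps)
qed

lemma linear_coeff_zero_if_quadratic_nonneg:
  fixes b c :: real
  assumes "\<And>e. 0 \<le> 2 * e * b + e\<^sup>2 * c"
  shows "b = 0"
proof (cases "c \<le> 0")
  case True
  have "0 \<le> 2 * (-b) * b + (-b)\<^sup>2 * c" by (rule assms)
  moreover have "(-b)\<^sup>2 * c \<le> 0" using True by (simp add: mult_nonneg_nonpos)
  ultimately have "b * b \<le> 0" by simp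
  then show ?thesis using mult_le_0_iff[of b b] by linarith
next
  case False
  have "0 \<le> 2 * (-b/c) * b + (-b/c)\<^sup>2 * c" by (rule assms)
  also have "\<dots> = - (b * b) / c" using False by (simp add: power2_eq_square field_simps)
  finally have "b * b \<le> 0" using False by (simp add: divide_le_0_iff)
  then show ?thesis using mult_le_0_iff[of b b] by linarith
qed

text \<open>First variation: along \<open>f + e g\<close> the Rayleigh bound is a quadratic in \<open>e\<close>
  that vanishes at \<open>e = 0\<close>, so its linear coefficient vanishes.\<close>
lemma rayleigh_first_variation:
  assumes sym: "\<And>x y. A x y = A y x" and f: "dot V f f = 1" "\<forall>i<k. dot V f (u i) = 0"
    and bound: "\<And>g. \<forall>i<k. dot V g (u i) = 0 \<Longrightarrow> bilin V A f f * dot V g g \<le> bilin V A g g"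
    and g: "\<forall>i<k. dot V g (u i) = 0"
  shows "bilin V A f g = bilin V A f f * dot V f g"
proof -
  define \<mu> where "\<mu> = bilin V A f f"
  have "0 \<le> 2 * e * (bilin V A f g - \<mu> * dot V f g) + e\<^sup>2 * (bilin V A g g - \<mu> * dot V g g)" for e
  proof -
    let ?h = "\<lambda>x. f x + e * g x"
    have "\<forall>i<k. dot V ?h (u i) = 0" using f(2) g by (simp add: dot_add_left dot_scale_left)
    then have "\<mu> * dot V ?h ?h \<le> bilin V A ?h ?h" unfolding \<mu>_def by (rule bound)
    moreover have "bilin V A ?h ?h = \<mu> + 2 * e * bilin V A f g + e\<^sup>2 * bilin V A g g"
      unfolding bilin_add_left bilin_add_right bilin_scale_left bilin_scale_right
        bilin_commute[of A V g f, OF sym] \<mu>_def by (simp add: power2_eq_square algebra_simps)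
    moreover have "dot V ?h ?h = 1 + 2 * e * dot V f g + e\<^sup>2 * dot V g g"
      unfolding dot_add_left dot_add_right dot_scale_left dot_scale_right dot_commute[of V g f] f(1)
      by (simp add: power2_eq_square algebra_simps)
    ultimately show ?thesis by (simp add: algebra_simps)
  qed
  then show ?thesis unfolding \<mu>_def using linear_coeff_zero_if_quadratic_nonneg by fastforce
qed

lemma rayleigh_minimizer_eigenvector:
  assumes fin: "finite V" and sym: "\<And>x y. A x y = A y x" and eig: "eigenvectors_on V A u lam k"
    and f: "dot V f f = 1" "\<forall>i<k. dot V f (u i) = 0"
    and bound: "\<And>g. \<forall>i<k. dot V g (u i) = 0 \<Longrightarrow> bilin V A f f * dot V g g \<le> bilin V A g g"
  shows "\<forall>x\<in>V. matvec V A f x = bilin V A f f * f x"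
proof -
  define \<mu> where "\<mu> = bilin V A f f"
  define r where "r = (\<lambda>x. matvec V A f x - \<mu> * f x)"
  have "\<forall>i<k. dot V r (u i) = 0"
  proof (intro allI impI)
    fix i assume i: "i < k"
    have "dot V (matvec V A f) (u i) = bilin V A f (u i)"
      unfolding dot_commute[of V "matvec V A f"] dot_matvec by (rule bilin_commute[OF sym])
    also have "\<dots> = dot V f (\<lambda>x. lam i * u i x)"
      unfolding dot_matvec[symmetric] using eig i unfolding eigenvectors_on_def by (intro dot_cong) auto
    finally show "dot V r (u i) = 0" using f(2) i unfolding r_def dot_diff_left dot_scale_left dot_scale_right by simp
  qed
  then have "bilin V A f r = \<mu> * dot V f r"
    unfolding \<mu>_def using rayleigh_first_variation[OF sym f bound] by blast
  moreover have "dot V r r = dot V r (matvec V A f) - \<mu> * dot V r f"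
    by (subst (2) r_def) (simp only: dot_diff_right dot_scale_right)
  then have "dot V r r = bilin V A f r - \<mu> * dot V f r"
    by (simp only: dot_matvec bilin_commute[of A V r f, OF sym] dot_commute[of V r f])
  ultimately have "dot V r r = 0" by simp
  then show ?thesis using dot_self_eq_0D[OF fin] unfolding r_def \<mu>_def by fastforce
qed

lemma orthonormal_eigenvectors_exist:
  assumes fin: "finite V" and sym: "\<And>x y. A x y = A y x"
  shows "k \<le> card V \<Longrightarrow> \<exists>u lam. orthonormal_on V u k \<and> eigenvectors_on V A u lam k"
proof (induction k)
  case 0
  show ?case by (auto simp: orthonormal_on_def eigenvectors_on_def)
next
  case (Suc k)
  then obtain u lam where on: "orthonormal_on V u k" and eig: "eigenvectors_on V A u lam k" by auto
  obtain f where f: "dot V f f = 1" "\<forall>i<k. dot V f (u i) = 0"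
    and min: "\<And>g. dot V g g = 1 \<Longrightarrow> \<forall>i<k. dot V g (u i) = 0 \<Longrightarrow> bilin V A f f \<le> bilin V A g g"
    using rayleigh_minimizer_exists[OF fin exists_unit_orthogonal[OF fin on]] Suc.prems by auto
  have f_eig: "\<forall>x\<in>V. matvec V A f x = bilin V A f f * f x"
    using rayleigh_minimizer_eigenvector[OF fin sym eig f rayleigh_bound_homogeneous[OF fin min]] .
  have "orthonormal_on V (u(k := f)) (Suc k)"
    using on f by (auto simp: orthonormal_on_def less_Suc_eq dot_commute[of V "u _" f])
  moreover have "eigenvectors_on V A (u(k := f)) (lam(k := bilin V A f f)) (Suc k)"
    using eig f_eig by (auto simp: eigenvectors_on_def less_Suc_eq)
  ultimately show ?case by blast
qed

text \<open>Completeness of an orthonormal basis: by Bessel, the residual of each indicator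
  function has norm \<open>1 - \<Sum>i. (u i x)\<^sup>2 \<ge> 0\<close>, and these norms add up to \<open>card V - card V = 0\<close>.\<close>
lemma spectral_basis_exists:
  fixes V :: "'a set"
  assumes fin: "finite V" and sym: "\<And>x y. A x y = A y x"
  shows "\<exists>u lam. spectral_basis V A u lam"
proof -
  obtain u lam where on: "orthonormal_on V u (card V)" and eig: "eigenvectors_on V A u lam (card V)"
    using orthonormal_eigenvectors_exist[of V A, OF fin sym] by blast
  let ?n = "card V"
  define d where "d = (\<lambda>(x0::'a) x. if x = x0 then 1 else 0::real)"
  define r where "r = (\<lambda>x0 x. d x0 x - (\<Sum>i<?n. dot V (d x0) (u i) * u i x))"
  have dot_d: "dot V (d x0) g = g x0" if "x0 \<in> V" for x0 g
    unfolding d_def by (rule dot_indicator_left[OF fin that])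
  have rr: "dot V (r x0) (r x0) = 1 - (\<Sum>i<?n. (u i x0)\<^sup>2)" if "x0 \<in> V" for x0
    using bessel_residual(2)[OF on, of "d x0"] unfolding r_def dot_d[OF that] by (simp add: d_def)
  have "(\<Sum>x\<in>V. 1 - (\<Sum>i<?n. (u i x)\<^sup>2)) = 0"
    using sum_squares_orthonormal[OF on] by (simp add: sum_subtractf)
  moreover have "\<forall>x\<in>V. 0 \<le> 1 - (\<Sum>i<?n. (u i x)\<^sup>2)"
    by (auto simp: rr[symmetric] dot_self_nonneg)
  ultimately have "\<forall>x\<in>V. 1 - (\<Sum>i<?n. (u i x)\<^sup>2) = 0"
    using sum_nonneg_eq_0_iff[OF fin, of "\<lambda>x. 1 - (\<Sum>i<?n. (u i x)\<^sup>2)"] by simp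
  then have residual_0: "\<forall>x\<in>V. dot V (r x) (r x) = 0" by (simp add: rr)
  have "(\<Sum>i<?n. u i x * u i y) = (if x = y then 1 else 0)" if x: "x \<in> V" and y: "y \<in> V" for x y
  proof -
    have "r x y = 0" using dot_self_eq_0D[OF fin] residual_0 x y by blast
    then show ?thesis unfolding r_def dot_d[OF x] by (auto simp: d_def)
  qed
  then show ?thesis using on eig unfolding spectral_basis_def by blast
qed

section \<open>Heat kernels and Laplacians\<close>

lemma matpow_spectral:
  assumes sym: "\<And>x y. A x y = A y x" and basis: "spectral_basis V A u lam"
    and x: "x \<in> V"
  shows "y \<in> V \<Longrightarrow> matpow V A k x y = (\<Sum>i<card V. lam i ^ k * u i x * u i y)"
proof (induction k arbitrary: y)
  case 0
  then show ?case using basis x unfolding spectral_basis_def by simp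
next
  case (Suc k)
  have eig: "(\<Sum>z\<in>V. u i z * A z y) = lam i * u i y" if "i < card V" for i
    using basis that Suc.prems unfolding spectral_basis_def eigenvectors_on_def matvec_def
    by (simp add: sym[of _ y] mult.commute)
  have "matpow V A (Suc k) x y = (\<Sum>z\<in>V. (\<Sum>i<card V. lam i ^ k * u i x * u i z) * A z y)"
    using Suc.IH by simp
  also have "\<dots> = (\<Sum>i<card V. lam i ^ k * u i x * (\<Sum>z\<in>V. u i z * A z y))"
    by (simp add: sum_distrib_left sum_distrib_right sum.swap[of _ V] mult.assoc)
  also have "\<dots> = (\<Sum>i<card V. lam i ^ Suc k * u i x * u i y)"
    using eig by (intro sum.cong refl) (simp add: algebra_simps)
  finally show ?case .
qed

lemma spectral_expansion:
  assumes "finite V" and "\<And>x y. A x y = A y x" and "spectral_basis V A u lam"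
    and "x \<in> V" and "y \<in> V"
  shows "A x y = (\<Sum>i<card V. lam i * u i x * u i y)"
proof -
  have "matpow V A 1 x y = A x y"
    using assms(1,4) by (simp add: if_distrib[of "\<lambda>a. a * _"] sum.delta cong: if_cong)
  then show ?thesis using matpow_spectral[OF assms(2,3,4,5), of 1] by simp
qed

lemma heat_kernel_spectral:
  assumes sym: "\<And>x y. laplacian V m x y = laplacian V m y x"
    and basis: "spectral_basis V (laplacian V m) u lam" and x: "x \<in> V"
  shows "heat_kernel V m t x = (\<Sum>i<card V. exp (- t * lam i) * (u i x)\<^sup>2)"
proof -
  have "(\<lambda>k. (- t * lam i) ^ k / fact k * (u i x)\<^sup>2) sums (exp (- t * lam i) * (u i x)\<^sup>2)" for i
    using sums_mult2[OF exp_converges[of "- t * lam i"], of "(u i x)\<^sup>2"]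
    by (simp add: divide_inverse mult.commute)
  then have "(\<lambda>k. \<Sum>i<card V. (- t * lam i) ^ k / fact k * (u i x)\<^sup>2)
      sums (\<Sum>i<card V. exp (- t * lam i) * (u i x)\<^sup>2)"
    by (rule sums_sum)
  moreover have "(- t) ^ k / fact k * matpow V (laplacian V m) k x x
      = (\<Sum>i<card V. (- t * lam i) ^ k / fact k * (u i x)\<^sup>2)" for k
    unfolding matpow_spectral[OF sym basis x x] sum_distrib_left
    by (intro sum.cong refl) (simp only: power_mult_distrib power2_eq_square, simp add: field_simps)
  ultimately have "(\<lambda>k. (- t) ^ k / fact k * matpow V (laplacian V m) k x x)
      sums (\<Sum>i<card V. exp (- t * lam i) * (u i x)\<^sup>2)"
    by simp
  then show ?thesis unfolding heat_kernel_def by (rule sums_unique[symmetric])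
qed

lemma heat_trace_spectral:
  assumes sym: "\<And>x y. laplacian V m x y = laplacian V m y x"
    and basis: "spectral_basis V (laplacian V m) u lam"
  shows "(\<Sum>x\<in>V. heat_kernel V m t x) = (\<Sum>i<card V. exp (- t * lam i))"
proof -
  have "(\<Sum>x\<in>V. heat_kernel V m t x) = (\<Sum>x\<in>V. \<Sum>i<card V. exp (- t * lam i) * (u i x)\<^sup>2)"
    using heat_kernel_spectral[OF sym basis] by simp
  also have "\<dots> = (\<Sum>i<card V. exp (- t * lam i) * dot V (u i) (u i))"
    unfolding dot_def by (simp add: sum.swap[of _ V] sum_distrib_left power2_eq_square)
  also have "\<dots> = (\<Sum>i<card V. exp (- t * lam i))"
    using basis unfolding spectral_basis_def orthonormal_on_def by simp
  finally show ?thesis .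
qed

lemma laplacian_symmetric: "mgraph V m \<Longrightarrow> laplacian V m x y = laplacian V m y x"
  unfolding laplacian_def mgraph_def by auto

lemma matvec_laplacian:
  assumes g: "mgraph V m" and x: "x \<in> V"
  shows "matvec V (laplacian V m) f x = (\<Sum>y\<in>V. real (m x y) * (f x - f y))"
proof -
  have fin: "finite V" and loop: "m x x = 0" using g unfolding mgraph_def by auto
  have "matvec V (laplacian V m) f x
      = (\<Sum>y\<in>V. (if x = y then (\<Sum>z\<in>V. real (m x z)) * f y else 0) - real (m x y) * f y)"
    unfolding matvec_def laplacian_def using loop by (intro sum.cong refl) auto
  also have "\<dots> = (\<Sum>z\<in>V. real (m x z)) * f x - (\<Sum>y\<in>V. real (m x y) * f y)"
    using fin x by (simp add: sum_subtractf sum.delta)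
  also have "\<dots> = (\<Sum>y\<in>V. real (m x y) * (f x - f y))"
    by (simp add: right_diff_distrib sum_subtractf sum_distrib_right)
  finally show ?thesis .
qed

lemma laplacian_energy:
  assumes g: "mgraph V m"
  shows "2 * dot V f (matvec V (laplacian V m) f) = (\<Sum>x\<in>V. \<Sum>y\<in>V. real (m x y) * (f x - f y)\<^sup>2)"
proof -
  have sym: "m x y = m y x" for x y using g unfolding mgraph_def by simp
  define S where "S = (\<Sum>x\<in>V. \<Sum>y\<in>V. real (m x y) * (f x * f x - f x * f y))"
  have "dot V f (matvec V (laplacian V m) f) = S"
    unfolding dot_def S_def using matvec_laplacian[OF g]
    by (intro sum.cong refl) (simp add: sum_distrib_left algebra_simps)
  moreover have "S = (\<Sum>x\<in>V. \<Sum>y\<in>V. real (m x y) * (f y * f y - f x * f y))"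
    unfolding S_def by (subst sum.swap) (simp add: sym mult.commute)
  then have "2 * S = (\<Sum>x\<in>V. \<Sum>y\<in>V. real (m x y) * (f x * f x - f x * f y)
      + real (m x y) * (f y * f y - f x * f y))"
    by (simp add: S_def sum.distrib)
  ultimately show ?thesis by (simp add: power2_eq_square algebra_simps)
qed

lemma matpow_transfer:
  assumes bij: "bij_betw \<phi> V W" and AB: "\<And>y y'. y \<in> V \<Longrightarrow> y' \<in> V \<Longrightarrow> A (\<phi> y) (\<phi> y') = B y y'"
    and y: "y \<in> V"
  shows "y' \<in> V \<Longrightarrow> matpow W A k (\<phi> y) (\<phi> y') = matpow V B k y y'"
proof (induction k arbitrary: y')
  case 0
  then show ?case using y bij_betw_imp_inj_on[OF bij] by (auto dest: inj_onD)
next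
  case (Suc k)
  have "matpow W A (Suc k) (\<phi> y) (\<phi> y') = (\<Sum>z\<in>V. matpow W A k (\<phi> y) (\<phi> z) * A (\<phi> z) (\<phi> y'))"
    by (simp add: sum.reindex_bij_betw[OF bij, symmetric])
  also have "\<dots> = matpow V B (Suc k) y y'"
    using Suc AB by simp
  finally show ?case .
qed

lemma laplacian_transfer:
  assumes bij: "bij_betw \<phi> V W" and em: "\<And>y y'. y \<in> V \<Longrightarrow> y' \<in> V \<Longrightarrow> e (\<phi> y) (\<phi> y') = m y y'"
    and y: "y \<in> V" and y': "y' \<in> V"
  shows "laplacian W e (\<phi> y) (\<phi> y') = laplacian V m y y'"
proof -
  have "(\<Sum>z\<in>W. real (e (\<phi> y) z)) = (\<Sum>z\<in>V. real (m y z))"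
    using em y by (simp add: sum.reindex_bij_betw[OF bij, symmetric])
  moreover have "\<phi> y = \<phi> y' \<longleftrightarrow> y = y'"
    using bij_betw_imp_inj_on[OF bij] y y' by (auto dest: inj_onD)
  ultimately show ?thesis unfolding laplacian_def using em y y' by auto
qed

lemma heat_trace_iso:
  assumes "mg_iso VH mH VG mG"
  shows "(\<Sum>x\<in>VG. heat_kernel VG mG t x) / real (card VG) = (\<Sum>x\<in>VH. heat_kernel VH mH t x) / real (card VH)"
proof -
  obtain \<phi> where bij: "bij_betw \<phi> VH VG"
    and em: "\<And>y y'. y \<in> VH \<Longrightarrow> y' \<in> VH \<Longrightarrow> mG (\<phi> y) (\<phi> y') = mH y y'"
    using assms unfolding mg_iso_def by blast
  have L: "laplacian VG mG (\<phi> y) (\<phi> y') = laplacian VH mH y y'" if "y \<in> VH" "y' \<in> VH" for y y'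
    using laplacian_transfer[where e=mG and m=mH, OF bij] em that by blast
  have "heat_kernel VG mG t (\<phi> y) = heat_kernel VH mH t y" if "y \<in> VH" for y
    unfolding heat_kernel_def using matpow_transfer[where A="laplacian VG mG" and B="laplacian VH mH", OF bij L that that] by simp
  then show ?thesis
    by (simp add: sum.reindex_bij_betw[OF bij, symmetric] bij_betw_same_card[OF bij])
qed

section \<open>Jensen's inequality for the exponential\<close>

lemma exp_eq_1_plus_imp_0:
  fixes z :: real
  assumes "exp z = 1 + z"
  shows "z = 0"
proof (cases "z < -2")
  case True
  then show ?thesis using assms exp_gt_zero[of z] by simp
next
  case False
  then have "(1 + z/2)\<^sup>2 \<le> (exp (z/2))\<^sup>2"
    using exp_ge_add_one_self[of "z/2"] by (intro power_mono) auto
  also have "\<dots> = 1 + z" using assms by (simp add: power2_eq_square exp_add[symmetric])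
  finally have "z * z \<le> 0" by (simp add: power2_eq_square field_simps)
  then show ?thesis using mult_le_0_iff[of z z] by linarith
qed

text \<open>The tangent line of \<open>exp\<close> at the mean gives both the inequality and its equality case.\<close>
lemma exp_jensen:
  fixes p a :: "'i \<Rightarrow> real"
  assumes fin: "finite I" and p0: "\<forall>i\<in>I. 0 \<le> p i" and p1: "(\<Sum>i\<in>I. p i) = 1"
  shows "exp (\<Sum>i\<in>I. p i * a i) \<le> (\<Sum>i\<in>I. p i * exp (a i))"
    and "exp (\<Sum>i\<in>I. p i * a i) = (\<Sum>i\<in>I. p i * exp (a i)) \<Longrightarrow>
      \<forall>i\<in>I. p i \<noteq> 0 \<longrightarrow> a i = (\<Sum>i\<in>I. p i * a i)"
proof -
  define m where "m = (\<Sum>i\<in>I. p i * a i)"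
  define D where "D i = p i * (exp (a i) - exp m * (1 + (a i - m)))" for i
  have tangent: "exp m * (1 + (a i - m)) \<le> exp (a i)" for i
    using mult_left_mono[OF exp_ge_add_one_self[of "a i - m"], of "exp m"] by (simp add: exp_diff)
  have D0: "\<forall>i\<in>I. 0 \<le> D i" unfolding D_def using p0 tangent by simp
  have "(\<Sum>i\<in>I. p i * (exp m * (1 + (a i - m))))
      = exp m * ((\<Sum>i\<in>I. p i) + (\<Sum>i\<in>I. p i * a i) - m * (\<Sum>i\<in>I. p i))"
    by (simp add: algebra_simps sum.distrib sum_subtractf sum_distrib_left sum_distrib_right)
  also have "\<dots> = exp m" using p1 unfolding m_def by simp
  finally have SD: "(\<Sum>i\<in>I. D i) = (\<Sum>i\<in>I. p i * exp (a i)) - exp m"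
    unfolding D_def by (simp add: right_diff_distrib sum_subtractf)
  then show "exp (\<Sum>i\<in>I. p i * a i) \<le> (\<Sum>i\<in>I. p i * exp (a i))"
    using sum_nonneg[of I D] D0 unfolding m_def by simp
  assume "exp (\<Sum>i\<in>I. p i * a i) = (\<Sum>i\<in>I. p i * exp (a i))"
  then have "\<forall>i\<in>I. D i = 0" using SD sum_nonneg_eq_0_iff[OF fin, of D] D0 unfolding m_def by simp
  then have "exp (a i) = exp m * (1 + (a i - m))" if "i \<in> I" "p i \<noteq> 0" for i
    using that unfolding D_def by auto
  then have "exp (a i - m) = 1 + (a i - m)" if "i \<in> I" "p i \<noteq> 0" for i
    using that by (simp add: exp_diff)
  then show "\<forall>i\<in>I. p i \<noteq> 0 \<longrightarrow> a i = (\<Sum>i\<in>I. p i * a i)"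
    using exp_eq_1_plus_imp_0 unfolding m_def by fastforce
qed

section \<open>Fractional tilings\<close>

locale fractional_tiling =
  fixes VG :: "'a set" and mG :: "'a \<Rightarrow> 'a \<Rightarrow> nat"
    and VH :: "'b set" and mH :: "'b \<Rightarrow> 'b \<Rightarrow> nat"
    and N :: nat and W :: "nat \<Rightarrow> 'a set" and e :: "nat \<Rightarrow> 'a \<Rightarrow> 'a \<Rightarrow> nat"
    and \<phi> :: "nat \<Rightarrow> 'b \<Rightarrow> 'a" and c :: nat
  assumes graph_G: "mgraph VG mG" and graph_H: "mgraph VH mH"
    and copy_subset: "l < N \<Longrightarrow> W l \<subseteq> VG"
    and copy_le: "l < N \<Longrightarrow> e l x x' \<le> mG x x'"
    and copy_support: "l < N \<Longrightarrow> 0 < e l x x' \<Longrightarrow> x \<in> W l \<and> x' \<in> W l"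
    and copy_bij: "l < N \<Longrightarrow> bij_betw (\<phi> l) VH (W l)"
    and copy_iso: "l < N \<Longrightarrow> y \<in> VH \<Longrightarrow> y' \<in> VH \<Longrightarrow> e l (\<phi> l y) (\<phi> l y') = mH y y'"
    and cover: "x \<in> VG \<Longrightarrow> card {l. l < N \<and> x \<in> W l} = c"
    and cover_pos: "0 < c"

lemma frac_tiles_imp_fractional_tiling:
  assumes "mgraph VG mG" "mgraph VH mH" "frac_tiles VH mH VG mG"
  shows "\<exists>N W e \<phi> c. fractional_tiling VG mG VH mH N W e \<phi> c"
proof -
  obtain cs c where cs: "\<forall>C\<in>set cs. is_copy VH mH VG mG C" and c: "0 < c"
    and cov: "\<forall>v\<in>VG. length (filter (\<lambda>C. v \<in> fst C) cs) = c"
    using assms(3) unfolding frac_tiles_def by blast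
  define W where "W l = fst (cs ! l)" for l
  define e where "e l = snd (cs ! l)" for l
  have copy: "W l \<subseteq> VG \<and> (\<forall>x y. e l x y \<le> mG x y) \<and> (\<forall>x y. 0 < e l x y \<longrightarrow> x \<in> W l \<and> y \<in> W l)
      \<and> mg_iso VH mH (W l) (e l)" if "l < length cs" for l
    using cs that unfolding is_copy_def W_def e_def by (auto simp: case_prod_beta)
  define \<phi> where "\<phi> l = (SOME \<phi>. bij_betw \<phi> VH (W l) \<and> (\<forall>x\<in>VH. \<forall>y\<in>VH. e l (\<phi> x) (\<phi> y) = mH x y))"
    for l
  have \<phi>: "bij_betw (\<phi> l) VH (W l) \<and> (\<forall>x\<in>VH. \<forall>y\<in>VH. e l (\<phi> l x) (\<phi> l y) = mH x y)"
    if "l < length cs" for l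
    using copy[OF that] unfolding mg_iso_def \<phi>_def by (rule someI_ex[OF conjunct2[OF conjunct2[OF conjunct2]]])
  have "fractional_tiling VG mG VH mH (length cs) W e \<phi> c"
    using assms(1,2) copy \<phi> c cov
    by unfold_locales (auto simp: W_def length_filter_conv_card)
  then show ?thesis by blast
qed

context fractional_tiling
begin

lemma finite_G: "finite VG" and finite_H: "finite VH"
  using graph_G graph_H unfolding mgraph_def by auto

lemma copy_vertex: "l < N \<Longrightarrow> y \<in> VH \<Longrightarrow> \<phi> l y \<in> VG"
  using copy_subset copy_bij bij_betwE by blast

lemma copy_inj: "l < N \<Longrightarrow> y \<in> VH \<Longrightarrow> y' \<in> VH \<Longrightarrow> \<phi> l y = \<phi> l y' \<longleftrightarrow> y = y'"
  using copy_bij bij_betw_imp_inj_on inj_onD by metis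

lemma sum_over_copies: "(\<Sum>l<N. \<Sum>y\<in>VH. F (\<phi> l y)) = real c * (\<Sum>x\<in>VG. F x)"
proof -
  have "(\<Sum>y\<in>VH. F (\<phi> l y)) = (\<Sum>x\<in>VG. if x \<in> W l then F x else 0)" if "l < N" for l
    using sum.reindex_bij_betw[OF copy_bij[OF that], of F] copy_subset[OF that] finite_G
    by (simp add: sum.inter_restrict[symmetric] Int_absorb1)
  then have "(\<Sum>l<N. \<Sum>y\<in>VH. F (\<phi> l y)) = (\<Sum>x\<in>VG. \<Sum>l<N. if x \<in> W l then F x else 0)"
    using sum.swap by force
  also have "\<dots> = (\<Sum>x\<in>VG. real c * F x)"
    using cover by (simp add: sum.If_cases Int_def conj_commute)
  finally show ?thesis by (simp add: sum_distrib_left)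
qed

lemma card_tiling: "real N * real (card VH) = real c * real (card VG)"
  using sum_over_copies[of "\<lambda>_. 1"] by simp

lemma copy_energy:
  assumes l: "l < N"
  shows "(\<Sum>y\<in>VH. \<Sum>y'\<in>VH. real (mH y y') * (g (\<phi> l y) - g (\<phi> l y'))\<^sup>2)
    = (\<Sum>x\<in>VG. \<Sum>x'\<in>VG. real (e l x x') * (g x - g x')\<^sup>2)"
proof -
  define F where "F x x' = real (e l x x') * (g x - g x')\<^sup>2" for x x'
  have F0: "F x x' = 0" if "x \<notin> W l \<or> x' \<notin> W l" for x x'
    using copy_support[OF l, of x x'] that unfolding F_def by (metis gr0I of_nat_0 mult_zero_left)
  have "(\<Sum>y\<in>VH. \<Sum>y'\<in>VH. real (mH y y') * (g (\<phi> l y) - g (\<phi> l y'))\<^sup>2)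
      = (\<Sum>y\<in>VH. \<Sum>y'\<in>VH. F (\<phi> l y) (\<phi> l y'))"
    unfolding F_def using copy_iso[OF l] by simp
  also have "\<dots> = (\<Sum>y\<in>VH. \<Sum>x'\<in>W l. F (\<phi> l y) x')"
    by (intro sum.cong refl sum.reindex_bij_betw[OF copy_bij[OF l]])
  also have "\<dots> = (\<Sum>x\<in>W l. \<Sum>x'\<in>W l. F x x')"
    by (rule sum.reindex_bij_betw[OF copy_bij[OF l]])
  also have "\<dots> = (\<Sum>x\<in>W l. \<Sum>x'\<in>VG. F x x')"
    using copy_subset[OF l] finite_G F0 by (intro sum.cong refl sum.mono_neutral_left) auto
  also have "\<dots> = (\<Sum>x\<in>VG. \<Sum>x'\<in>VG. F x x')"
    using copy_subset[OF l] finite_G F0 by (intro sum.mono_neutral_left) (auto intro: sum.neutral)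
  finally show ?thesis unfolding F_def .
qed

lemma copy_multiplicity_le:
  assumes "x \<in> VG"
  shows "(\<Sum>l<N. real (e l x x')) \<le> real c * real (mG x x')"
proof -
  have "(\<Sum>l<N. real (e l x x')) = (\<Sum>l\<in>{l. l < N \<and> x \<in> W l}. real (e l x x'))"
    using copy_support by (intro sum.mono_neutral_right) (auto simp: not_less)
  also have "\<dots> \<le> (\<Sum>l\<in>{l. l < N \<and> x \<in> W l}. real (mG x x'))"
    using copy_le by (intro sum_mono) auto
  also have "\<dots> = real c * real (mG x x')" using cover[OF assms] by simp
  finally show ?thesis .
qed

lemma copies_energy_le:
  "(\<Sum>l<N. \<Sum>y\<in>VH. \<Sum>y'\<in>VH. real (mH y y') * (g (\<phi> l y) - g (\<phi> l y'))\<^sup>2)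
     \<le> real c * (\<Sum>x\<in>VG. \<Sum>x'\<in>VG. real (mG x x') * (g x - g x')\<^sup>2)"
proof -
  have "(\<Sum>l<N. \<Sum>y\<in>VH. \<Sum>y'\<in>VH. real (mH y y') * (g (\<phi> l y) - g (\<phi> l y'))\<^sup>2)
      = (\<Sum>x\<in>VG. \<Sum>x'\<in>VG. (\<Sum>l<N. real (e l x x')) * (g x - g x')\<^sup>2)"
    using copy_energy by (simp add: sum_distrib_right sum.swap[of _ "{..<N}"])
  also have "\<dots> \<le> (\<Sum>x\<in>VG. \<Sum>x'\<in>VG. real c * real (mG x x') * (g x - g x')\<^sup>2)"
    using copy_multiplicity_le by (intro sum_mono mult_right_mono) auto
  finally show ?thesis by (simp add: sum_distrib_left mult.assoc)
qed

end

section \<open>Comparison of heat traces\<close>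

locale tiling_spectra = fractional_tiling +
  fixes u :: "nat \<Rightarrow> 'a \<Rightarrow> real" and lam :: "nat \<Rightarrow> real"
    and v :: "nat \<Rightarrow> 'b \<Rightarrow> real" and nu :: "nat \<Rightarrow> real"
  assumes basis_G: "spectral_basis VG (laplacian VG mG) u lam"
    and basis_H: "spectral_basis VH (laplacian VH mH) v nu"
begin

lemma orthonormal_G: "orthonormal_on VG u (card VG)"
  and eigenvectors_G: "eigenvectors_on VG (laplacian VG mG) u lam (card VG)"
  and complete_G: "\<forall>x\<in>VG. \<forall>y\<in>VG. (\<Sum>i<card VG. u i x * u i y) = (if x = y then 1 else 0)"
  and orthonormal_H: "orthonormal_on VH v (card VH)"
  and complete_H: "\<forall>x\<in>VH. \<forall>y\<in>VH. (\<Sum>i<card VH. v i x * v i y) = (if x = y then 1 else 0)"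
  using basis_G basis_H unfolding spectral_basis_def by auto

lemma laplacian_H_expansion:
  "y \<in> VH \<Longrightarrow> y' \<in> VH \<Longrightarrow> laplacian VH mH y y' = (\<Sum>k<card VH. nu k * v k y * v k y')"
  using spectral_expansion[OF finite_H laplacian_symmetric[OF graph_H] basis_H] .

lemma laplacian_G_expansion:
  "x \<in> VG \<Longrightarrow> x' \<in> VG \<Longrightarrow> laplacian VG mG x x' = (\<Sum>j<card VG. lam j * u j x * u j x')"
  using spectral_expansion[OF finite_G laplacian_symmetric[OF graph_G] basis_G] .

definition tile_coeff :: "nat \<Rightarrow> nat \<Rightarrow> nat \<Rightarrow> real" where
  "tile_coeff l j k = dot VH (\<lambda>y. u j (\<phi> l y)) (v k)"

definition tile_heat :: "real \<Rightarrow> nat \<Rightarrow> real" where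
  "tile_heat t j = (\<Sum>l<N. \<Sum>k<card VH. (tile_coeff l j k)\<^sup>2 / real c * exp (- t * nu k))"

lemma tile_weights_sum:
  assumes j: "j < card VG"
  shows "(\<Sum>l<N. \<Sum>k<card VH. (tile_coeff l j k)\<^sup>2) = real c"
proof -
  have "(\<Sum>l<N. \<Sum>k<card VH. (tile_coeff l j k)\<^sup>2) = (\<Sum>l<N. \<Sum>y\<in>VH. u j (\<phi> l y) * u j (\<phi> l y))"
    unfolding tile_coeff_def parseval[OF finite_H complete_H] by (simp add: dot_def)
  also have "\<dots> = real c * dot VG (u j) (u j)"
    unfolding dot_def by (rule sum_over_copies)
  finally show ?thesis using orthonormal_G j unfolding orthonormal_on_def by simp
qed

text \<open>Since each edge of G is covered by at most \<open>c\<close> copies, the Dirichlet energies of the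
  pulled-back eigenvector add up to at most \<open>c\<close> times its energy \<open>lam j\<close> on G.\<close>
lemma tile_weights_energy:
  assumes j: "j < card VG"
  shows "(\<Sum>l<N. \<Sum>k<card VH. nu k * (tile_coeff l j k)\<^sup>2) \<le> real c * lam j"
proof -
  have H: "2 * (\<Sum>k<card VH. nu k * (tile_coeff l j k)\<^sup>2)
      = (\<Sum>y\<in>VH. \<Sum>y'\<in>VH. real (mH y y') * (u j (\<phi> l y) - u j (\<phi> l y'))\<^sup>2)" for l
  proof -
    have "(\<Sum>k<card VH. nu k * (tile_coeff l j k)\<^sup>2)
        = bilin VH (laplacian VH mH) (\<lambda>y. u j (\<phi> l y)) (\<lambda>y. u j (\<phi> l y))"
      unfolding tile_coeff_def by (rule bilin_expansion[OF finite_H]) (simp add: laplacian_H_expansion)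
    then show ?thesis using laplacian_energy[OF graph_H, of "\<lambda>y. u j (\<phi> l y)"] by (simp add: dot_matvec)
  qed
  have "dot VG (u j) (matvec VG (laplacian VG mG) (u j)) = dot VG (u j) (\<lambda>x. lam j * u j x)"
    using eigenvectors_G j unfolding eigenvectors_on_def by (intro dot_cong) auto
  then have G: "(\<Sum>x\<in>VG. \<Sum>x'\<in>VG. real (mG x x') * (u j x - u j x')\<^sup>2) = 2 * lam j"
    using laplacian_energy[OF graph_G, of "u j"] orthonormal_G j
    unfolding orthonormal_on_def dot_scale_right by simp
  have "2 * (\<Sum>l<N. \<Sum>k<card VH. nu k * (tile_coeff l j k)\<^sup>2)
      = (\<Sum>l<N. 2 * (\<Sum>k<card VH. nu k * (tile_coeff l j k)\<^sup>2))"
    by (rule sum_distrib_left)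
  also have "\<dots> \<le> real c * (2 * lam j)"
    using copies_energy_le[of "u j"] unfolding H G .
  finally show ?thesis by simp
qed

end

context tiling_spectra
begin

text \<open>The weights \<open>(tile_coeff l j k)\<^sup>2 / c\<close> form a probability distribution on pairs
  \<open>(l, k)\<close> whose mean eigenvalue is at most \<open>lam j\<close>; Jensen's inequality for
  \<open>exp (- t \<cdot> _)\<close> does the rest.\<close>
lemma exp_le_tile_heat:
  assumes j: "j < card VG" and t: "0 < t"
  shows "exp (- t * lam j) \<le> tile_heat t j"
    and "exp (- t * lam j) = tile_heat t j \<Longrightarrow>
      \<forall>l<N. \<forall>k<card VH. tile_coeff l j k \<noteq> 0 \<longrightarrow> nu k = lam j"
proof -
  define I where "I = {..<N} \<times> {..<card VH}"
  define p where "p = (\<lambda>(l, k). (tile_coeff l j k)\<^sup>2 / real c)"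
  define a where "a = (\<lambda>(l::nat, k). - t * nu k)"
  have c: "0 < real c" using cover_pos by simp
  have p0: "\<forall>i\<in>I. 0 \<le> p i" unfolding p_def by auto
  have p1: "(\<Sum>i\<in>I. p i) = 1"
    using tile_weights_sum[OF j] c
    by (simp add: I_def p_def sum.cartesian_product[symmetric] sum_divide_distrib[symmetric])
  have mean: "(\<Sum>i\<in>I. p i * a i) = - t / real c * (\<Sum>l<N. \<Sum>k<card VH. nu k * (tile_coeff l j k)\<^sup>2)"
    unfolding I_def sum_distrib_left sum.cartesian_product
    by (intro sum.cong refl) (auto simp: p_def a_def field_simps)
  have heat: "(\<Sum>i\<in>I. p i * exp (a i)) = tile_heat t j"
    unfolding I_def tile_heat_def sum.cartesian_product by (intro sum.cong refl) (auto simp: p_def a_def)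
  have "- t * lam j \<le> (\<Sum>i\<in>I. p i * a i)"
    using mult_left_mono[OF tile_weights_energy[OF j], of t] t c unfolding mean by (simp add: field_simps)
  then have le_mean: "exp (- t * lam j) \<le> exp (\<Sum>i\<in>I. p i * a i)" by simp
  have jensen: "exp (\<Sum>i\<in>I. p i * a i) \<le> (\<Sum>i\<in>I. p i * exp (a i))"
    using exp_jensen(1)[OF _ p0 p1] by (simp add: I_def)
  show "exp (- t * lam j) \<le> tile_heat t j" using le_mean jensen heat by linarith
  assume "exp (- t * lam j) = tile_heat t j"
  then have jensen_eq: "exp (\<Sum>i\<in>I. p i * a i) = (\<Sum>i\<in>I. p i * exp (a i))"
    and "exp (- t * lam j) = exp (\<Sum>i\<in>I. p i * a i)"
    using le_mean jensen heat by linarith+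
  from this(2) have "- t * lam j = (\<Sum>i\<in>I. p i * a i)" by (simp only: exp_inj_iff)
  then have "\<forall>i\<in>I. p i \<noteq> 0 \<longrightarrow> a i = - t * lam j"
    using exp_jensen(2)[OF _ p0 p1 jensen_eq] by (simp add: I_def)
  then show "\<forall>l<N. \<forall>k<card VH. tile_coeff l j k \<noteq> 0 \<longrightarrow> nu k = lam j"
    using t c by (auto simp: I_def p_def a_def)
qed

lemma sum_tile_coeff_squares:
  assumes l: "l < N" and k: "k < card VH"
  shows "(\<Sum>j<card VG. (tile_coeff l j k)\<^sup>2) = 1"
proof -
  have "(\<Sum>j<card VG. 1 * (dot VH (v k) (\<lambda>y. u j (\<phi> l y)))\<^sup>2)
      = bilin VH (\<lambda>y y'. if y = y' then 1 else 0) (v k) (v k)"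
    using complete_G copy_vertex[OF l] copy_inj[OF l] by (intro bilin_expansion[OF finite_H]) simp
  also have "\<dots> = 1"
    using orthonormal_H k unfolding bilin_identity[OF finite_H] orthonormal_on_def by simp
  finally show ?thesis unfolding tile_coeff_def by (simp add: dot_commute[of VH "v k"])
qed

lemma sum_tile_heat:
  "(\<Sum>j<card VG. tile_heat t j) = real N / real c * (\<Sum>k<card VH. exp (- t * nu k))"
proof -
  have "(\<Sum>j<card VG. tile_heat t j)
      = (\<Sum>l<N. \<Sum>k<card VH. (\<Sum>j<card VG. (tile_coeff l j k)\<^sup>2) * (exp (- t * nu k) / real c))"
    unfolding tile_heat_def sum_distrib_right by (simp add: sum.swap[of _ "{..<card VG}"])
  also have "\<dots> = (\<Sum>l<N. \<Sum>k<card VH. exp (- t * nu k) / real c)"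
    using sum_tile_coeff_squares by simp
  finally show ?thesis by (simp add: sum_divide_distrib[symmetric])
qed

lemma heat_trace_le:
  assumes t: "0 < t"
  shows "(\<Sum>x\<in>VG. heat_kernel VG mG t x) \<le> real N / real c * (\<Sum>x\<in>VH. heat_kernel VH mH t x)"
  using exp_le_tile_heat(1)[OF _ t] sum_tile_heat[of t]
    heat_trace_spectral[OF laplacian_symmetric[OF graph_G] basis_G]
    heat_trace_spectral[OF laplacian_symmetric[OF graph_H] basis_H]
  by (metis lessThan_iff sum_mono)

end

context tiling_spectra
begin

lemma copy_eigenvector:
  assumes l: "l < N" and same: "\<forall>j<card VG. \<forall>k<card VH. tile_coeff l j k \<noteq> 0 \<longrightarrow> nu k = lam j"
    and j: "j < card VG" and y: "y \<in> VH"
  shows "matvec VH (laplacian VH mH) (\<lambda>y. u j (\<phi> l y)) y = lam j * u j (\<phi> l y)"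
proof -
  have "matvec VH (laplacian VH mH) (\<lambda>y. u j (\<phi> l y)) y = (\<Sum>k<card VH. nu k * tile_coeff l j k * v k y)"
    unfolding matvec_def tile_coeff_def dot_def using laplacian_H_expansion[OF y]
    by (simp add: sum_distrib_left sum_distrib_right sum.swap[of _ VH] mult_ac)
  also have "\<dots> = lam j * (\<Sum>k<card VH. tile_coeff l j k * v k y)"
    using same j by (auto simp: sum_distrib_left intro!: sum.cong)
  also have "(\<Sum>k<card VH. tile_coeff l j k * v k y) = (\<Sum>y'\<in>VH. u j (\<phi> l y') * (\<Sum>k<card VH. v k y' * v k y))"
    unfolding tile_coeff_def dot_def by (simp add: sum_distrib_left sum_distrib_right sum.swap[of _ VH] mult_ac)
  also have "\<dots> = u j (\<phi> l y)"
    using complete_H y finite_H by (simp add: if_distrib[of "\<lambda>a. _ * a"] cong: if_cong)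
  finally show ?thesis .
qed

lemma copy_laplacian_eigen:
  assumes l: "l < N" and same: "\<forall>j<card VG. \<forall>k<card VH. tile_coeff l j k \<noteq> 0 \<longrightarrow> nu k = lam j"
    and j: "j < card VG" and x: "x \<in> W l"
  shows "(\<Sum>x'\<in>W l. laplacian (W l) (e l) x x' * u j x') = lam j * u j x"
proof -
  obtain y where y: "y \<in> VH" and xy: "x = \<phi> l y"
    using copy_bij[OF l] x by (metis bij_betw_imp_surj_on imageE)
  have "(\<Sum>x'\<in>W l. laplacian (W l) (e l) x x' * u j x')
      = (\<Sum>y'\<in>VH. laplacian (W l) (e l) (\<phi> l y) (\<phi> l y') * u j (\<phi> l y'))"
    unfolding xy by (rule sum.reindex_bij_betw[OF copy_bij[OF l], symmetric])
  also have "\<dots> = matvec VH (laplacian VH mH) (\<lambda>y. u j (\<phi> l y)) y"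
    unfolding matvec_def using laplacian_transfer[where e="e l" and m=mH, OF copy_bij[OF l] copy_iso[OF l] y] by simp
  finally show ?thesis using copy_eigenvector[OF l same j y] xy by simp
qed

text \<open>Expand the row of the Laplacian of G in the eigenbasis of G.\<close>
lemma copy_laplacian_eq:
  assumes l: "l < N" and same: "\<forall>j<card VG. \<forall>k<card VH. tile_coeff l j k \<noteq> 0 \<longrightarrow> nu k = lam j"
    and x: "x \<in> W l" and z: "z \<in> VG"
  shows "laplacian VG mG x z = (if z \<in> W l then laplacian (W l) (e l) x z else 0)"
proof -
  have W: "W l \<subseteq> VG" and fin: "finite (W l)"
    using copy_subset[OF l] finite_G finite_subset by auto
  have "laplacian VG mG x z = (\<Sum>j<card VG. lam j * u j x * u j z)"
    using W x z by (intro laplacian_G_expansion) auto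
  also have "\<dots> = (\<Sum>j<card VG. (\<Sum>x'\<in>W l. laplacian (W l) (e l) x x' * u j x') * u j z)"
    using copy_laplacian_eigen[OF l same _ x] by (intro sum.cong) auto
  also have "\<dots> = (\<Sum>x'\<in>W l. laplacian (W l) (e l) x x' * (\<Sum>j<card VG. u j x' * u j z))"
    by (simp add: sum_distrib_left sum_distrib_right sum.swap[of _ "W l"] mult_ac)
  also have "\<dots> = (\<Sum>x'\<in>W l. if x' = z then laplacian (W l) (e l) x x' else 0)"
    using complete_G W z by (intro sum.cong refl) auto
  finally show ?thesis using fin by simp
qed

text \<open>Rows of the two Laplacians agreeing means that no edge of G leaves the copy and that
  the copy carries all edges of G among its vertices; connectivity does the rest.\<close>
lemma copy_is_whole_graph:
  assumes conn: "connected_mg VG mG" and l: "l < N"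
    and same: "\<forall>j<card VG. \<forall>k<card VH. tile_coeff l j k \<noteq> 0 \<longrightarrow> nu k = lam j"
  shows "mg_iso VH mH VG mG"
proof -
  have support: "0 < mG x z \<Longrightarrow> x \<in> VG \<and> z \<in> VG" and loop: "mG x x = 0" for x z
    using graph_G unfolding mgraph_def by auto
  have edge_eq: "mG x z = (if z \<in> W l then e l x z else 0)" if "x \<in> W l" "z \<in> VG" "x \<noteq> z" for x z
    using copy_laplacian_eq[OF l same that(1,2)] that(3) unfolding laplacian_def by auto
  have closed: "z \<in> W l" if "x \<in> W l" "0 < mG x z" for x z
    using edge_eq[of x z] support[of x z] that by (metis less_irrefl loop)
  obtain y0 where "y0 \<in> VH" using graph_H unfolding mgraph_def by blast
  then have x0: "\<phi> l y0 \<in> W l" using copy_bij[OF l] bij_betwE by blast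
  have "z \<in> W l" if "z \<in> VG" for z
  proof -
    have "(\<lambda>x z. 0 < mG x z)\<^sup>*\<^sup>* (\<phi> l y0) z"
      using conn x0 copy_subset[OF l] that unfolding connected_mg_def by blast
    then show ?thesis by (induction rule: rtranclp_induct) (use x0 closed in blast)+
  qed
  then have W: "W l = VG" using copy_subset[OF l] by blast
  have "mG (\<phi> l y) (\<phi> l y') = mH y y'" if "y \<in> VH" "y' \<in> VH" for y y'
  proof (cases "y = y'")
    case True
    then show ?thesis using loop copy_iso[OF l that] copy_le[OF l] by (metis le_zero_eq)
  next
    case False
    then show ?thesis using edge_eq copy_iso[OF l that] copy_inj[OF l that] copy_vertex[OF l] that W
      by (metis bij_betwE copy_bij[OF l])
  qed
  then show ?thesis unfolding mg_iso_def using copy_bij[OF l] W by auto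
qed

lemma density_factor: "real N / real c * s / real (card VG) = s / real (card VH)"
proof -
  have "0 < card VG" "0 < card VH"
    using graph_G graph_H unfolding mgraph_def by (auto simp: card_gt_0_iff)
  then show ?thesis using card_tiling cover_pos by (simp add: field_simps)
qed

lemma heat_trace_density_le:
  assumes "0 < t"
  shows "(\<Sum>x\<in>VG. heat_kernel VG mG t x) / real (card VG)
    \<le> (\<Sum>x\<in>VH. heat_kernel VH mH t x) / real (card VH)"
  using divide_right_mono[OF heat_trace_le[OF assms], of "real (card VG)"]
  unfolding density_factor by simp

lemma heat_trace_density_eq_imp_iso:
  assumes conn: "connected_mg VG mG" and t: "0 < t"
    and eq: "(\<Sum>x\<in>VG. heat_kernel VG mG t x) / real (card VG)
      = (\<Sum>x\<in>VH. heat_kernel VH mH t x) / real (card VH)"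
  shows "mg_iso VH mH VG mG"
proof -
  have "0 < card VG" using graph_G unfolding mgraph_def by (auto simp: card_gt_0_iff)
  moreover have "(\<Sum>x\<in>VG. heat_kernel VG mG t x) / real (card VG)
      = real N / real c * (\<Sum>x\<in>VH. heat_kernel VH mH t x) / real (card VG)"
    using eq density_factor by simp
  ultimately have "(\<Sum>x\<in>VG. heat_kernel VG mG t x) = real N / real c * (\<Sum>x\<in>VH. heat_kernel VH mH t x)"
    by (simp only: divide_cancel_right) simp
  then have sum_eq: "(\<Sum>j<card VG. exp (- t * lam j)) = (\<Sum>j<card VG. tile_heat t j)"
    unfolding sum_tile_heat heat_trace_spectral[OF laplacian_symmetric[OF graph_G] basis_G]
      heat_trace_spectral[OF laplacian_symmetric[OF graph_H] basis_H] .
  have le: "\<forall>j\<in>{..<card VG}. exp (- t * lam j) \<le> tile_heat t j"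
    using exp_le_tile_heat(1)[OF _ t] by simp
  have "exp (- t * lam j) = tile_heat t j" if "j < card VG" for j
  proof (rule ccontr)
    assume "exp (- t * lam j) \<noteq> tile_heat t j"
    then have "exp (- t * lam j) < tile_heat t j" using le that by (simp add: order_less_le)
    then have "(\<Sum>j<card VG. exp (- t * lam j)) < (\<Sum>j<card VG. tile_heat t j)"
      using sum_strict_mono_ex1[OF finite_lessThan le] that by blast
    with sum_eq show False by simp
  qed
  then have same: "\<forall>l<N. \<forall>j<card VG. \<forall>k<card VH. tile_coeff l j k \<noteq> 0 \<longrightarrow> nu k = lam j"
    using exp_le_tile_heat(2)[OF _ t] by blast
  have "0 < N" using card_tiling cover_pos \<open>0 < card VG\<close> by (cases "N = 0") simp_all
  then show ?thesis using copy_is_whole_graph[OF conn \<open>0 < N\<close>] same by blast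
qed

end

theorem theorem4p1:
  fixes VG :: "'a set" and mG :: "'a \<Rightarrow> 'a \<Rightarrow> nat"
    and VH :: "'b set" and mH :: "'b \<Rightarrow> 'b \<Rightarrow> nat" and t :: real
  assumes "mgraph VG mG" and "connected_mg VG mG"
    and "mgraph VH mH" and "connected_mg VH mH"
    and "frac_tiles VH mH VG mG"
    and "0 < t"
  shows "(\<Sum>x\<in>VG. heat_kernel VG mG t x) / real (card VG)
           \<le> (\<Sum>x\<in>VH. heat_kernel VH mH t x) / real (card VH)
     \<and> ((\<Sum>x\<in>VG. heat_kernel VG mG t x) / real (card VG)
           = (\<Sum>x\<in>VH. heat_kernel VH mH t x) / real (card VH)
         \<longleftrightarrow> mg_iso VH mH VG mG)"
proof -
  obtain N W e \<phi> c where tiling: "fractional_tiling VG mG VH mH N W e \<phi> c"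
    using frac_tiles_imp_fractional_tiling[OF assms(1,3,5)] by blast
  interpret fractional_tiling VG mG VH mH N W e \<phi> c by (fact tiling)
  obtain u lam v nu where "spectral_basis VG (laplacian VG mG) u lam"
    and "spectral_basis VH (laplacian VH mH) v nu"
    using spectral_basis_exists[of VG "laplacian VG mG", OF finite_G laplacian_symmetric[OF graph_G]]
      spectral_basis_exists[of VH "laplacian VH mH", OF finite_H laplacian_symmetric[OF graph_H]]
    by blast
  then interpret tiling_spectra VG mG VH mH N W e \<phi> c u lam v nu
    by (intro tiling_spectra.intro tiling tiling_spectra_axioms.intro)
  show ?thesis
    using heat_trace_density_le[OF assms(6)] heat_trace_density_eq_imp_iso[OF assms(2,6)]
      heat_trace_iso[of VH mH VG mG t] by blast
qed

end
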